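(* Let $(q_k)_{k\ge1}$ be a sequence of integers with $q_k \ge 2$ for every $k \in \mathbb{N}$ and $\liminf_{k\to\infty} q_k/k > 3$. Then there exists a constant $C$ such that the following holds. For every $n \in \mathbb{N}$ and every collection $\mathcal{A}$ of hyperplanes in $Q := [q_1]\times\cdots\times[q_n]$ whose union is $Q$, either two distinct hyperplanes of $\mathcal{A}$ are parallel, or there exists $A \in \mathcal{A}$ with $F(A) \subseteq [C]$.
   Context: $[m] = \{1,\dots,m\}$. For finite sets $S_1,\dots,S_n$, a hyperplane in $Q = S_1\times\cdots\times S_n$ is a set $A = A_1\times\cdots\times A_n$ where each $A_k$ is either $S_k$ or a singleton subset of $S_k$. Its set of fixed coordinates is $F(A) = \{k : A_k \text{ is a singleton}\}$. Two hyperplanes $A, A'$ are parallel if $F(A) = F(A')$. *)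

theory Defs
  imports Main "HOL-Library.Extended_Real" "HOL-Library.FuncSet"
begin

definition grid :: "(nat \<Rightarrow> nat) \<Rightarrow> nat \<Rightarrow> (nat \<Rightarrow> nat) set" where
  "grid q n = PiE {1..n} (\<lambda>k. {1..q k})"

definition is_hyperplane :: "(nat \<Rightarrow> nat) \<Rightarrow> nat \<Rightarrow> (nat \<Rightarrow> nat set) \<Rightarrow> bool" where
  "is_hyperplane q n A \<longleftrightarrow>
     (\<forall>k\<in>{1..n}. A k = {1..q k} \<or> (\<exists>a\<in>{1..q k}. A k = {a})) \<and>
     (\<forall>k. k \<notin> {1..n} \<longrightarrow> A k = {})"

definition hyp_set :: "nat \<Rightarrow> (nat \<Rightarrow> nat set) \<Rightarrow> (nat \<Rightarrow> nat) set" where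
  "hyp_set n A = PiE {1..n} A"

definition fixed_coords :: "nat \<Rightarrow> (nat \<Rightarrow> nat set) \<Rightarrow> nat set" where
  "fixed_coords n A = {k \<in> {1..n}. \<exists>a. A k = {a}}"

definition parallel :: "nat \<Rightarrow> (nat \<Rightarrow> nat set) \<Rightarrow> (nat \<Rightarrow> nat set) \<Rightarrow> bool" where
  "parallel n A A' \<longleftrightarrow> fixed_coords n A = fixed_coords n A'"

end

theory Submission
  imports Defs
begin

(*
  Write a hyperplane with fixed coordinates F as the pattern "y i = v i for i in F" and build a point
  of Q outside all of them by choosing its coordinates one after another at random.  When y_j is
  chosen, the hyperplanes whose largest fixed coordinate is j and which agree with y so far are live,
  and their values at j are blocked.  If at most delta q_j values are blocked, y_j is uniform among the
  others, otherwise uniform on [q_j]; in both cases y_j takes any given value with probability at most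
  rho_j = 1 / ((1 - delta) q_j).  A hyperplane can only contain y if the step at its largest fixed
  coordinate was crowded.  As no two hyperplanes have the same fixed set, the expected square of the
  number of live hyperplanes at step j is at most the sum, over pairs S, S' of subsets of [j - 1], of the
  product of rho_i over S u S', which is the product of 1 + 3 rho_i over i < j.  By Markov's inequality,
  step j is crowded with probability at most prod_{i<j} (1 + 3 rho_i) / (delta q_j)^2.  If q_j >= c j with
  c > 3, then for suitable delta we get 3 rho_j <= t / j with t < 1, so the product grows like j^t and
  these bounds are summable.  If every fixed set reaches beyond C, no step j <= C has live hyperplanes;
  choosing C so that the bounds beyond C sum to less than 1, some outcome y avoids every hyperplane.
*)

section \<open>Summability of slowly growing products\<close>

lemma summable_tail_sums_less:
  fixes a :: "nat \<Rightarrow> real"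
  assumes nonneg: "\<And>j. 0 \<le> a j" and "summable a" and "0 < \<epsilon>"
  shows "\<exists>C. \<forall>n. (\<Sum>j\<in>{C<..n}. a j) < \<epsilon>"
proof -
  obtain C where C: "\<forall>m\<ge>C. norm (\<Sum>i. a (i + m)) < \<epsilon>"
    using suminf_exist_split[OF \<open>0 < \<epsilon>\<close> \<open>summable a\<close>] by auto
  have tail: "summable (\<lambda>i. a (i + C))"
    using \<open>summable a\<close> by (rule summable_ignore_initial_segment)
  have "(\<Sum>j\<in>{C<..n}. a j) < \<epsilon>" for n
  proof -
    have "(\<Sum>j\<in>{C<..n}. a j) \<le> (\<Sum>j\<in>{C..<Suc n}. a j)"
      by (rule sum_mono2) (auto simp: nonneg)
    also have "\<dots> = (\<Sum>i<Suc n - C. a (i + C))"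
      by (simp add: sum.atLeastLessThan_shift_0 atLeast0LessThan add.commute)
    also have "\<dots> \<le> (\<Sum>i. a (i + C))"
      using tail nonneg by (intro sum_le_suminf) auto
    also have "\<dots> < \<epsilon>"
      using C by auto
    finally show ?thesis .
  qed
  then show ?thesis by blast
qed

lemma sum_div_consecutive_telescope:
  fixes P :: "nat \<Rightarrow> real"
  assumes "1 \<le> K" and "t < 1" and growth: "\<And>j. K \<le> j \<Longrightarrow> P (Suc j) \<le> P j * (1 + t / j)"
    and "K \<le> N"
  shows "(\<Sum>j\<in>{K..<N}. P j / (real j * (real j + 1))) \<le> (P K / K - P N / N) / (1 - t)"
  using \<open>K \<le> N\<close>
proof (induction N rule: dec_induct)
  case base
  show ?case by simp
next
  case (step N)
  have "0 < real N" and "0 < 1 - t"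
    using step.hyps \<open>1 \<le> K\<close> \<open>t < 1\<close> by auto
  have "P (Suc N) / (N + 1) \<le> P N * (1 + t / N) / (N + 1)"
    using growth[OF step.hyps(1)] by (simp add: divide_right_mono)
  also have "\<dots> = P N / N - (1 - t) * (P N / (real N * (real N + 1)))"
    using \<open>0 < real N\<close> by (simp add: divide_simps) (simp add: algebra_simps)
  finally have "P N / (real N * (real N + 1)) \<le> (P N / N - P (Suc N) / Suc N) / (1 - t)"
    using \<open>0 < 1 - t\<close> by (simp add: pos_le_divide_eq mult.commute)
  with step.IH have "(\<Sum>j\<in>{K..<Suc N}. P j / (real j * (real j + 1)))
      \<le> (P K / K - P N / N) / (1 - t) + (P N / N - P (Suc N) / Suc N) / (1 - t)"
    using step.hyps(1) by simp
  also have "\<dots> = (P K / K - P (Suc N) / Suc N) / (1 - t)"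
    by (simp add: diff_divide_distrib)
  finally show ?case .
qed

lemma summable_div_consecutive:
  fixes P :: "nat \<Rightarrow> real"
  assumes "1 \<le> K" and "t < 1" and nonneg: "\<And>j. 0 \<le> P j"
    and growth: "\<And>j. K \<le> j \<Longrightarrow> P (Suc j) \<le> P j * (1 + t / j)"
  shows "summable (\<lambda>j. P j / (real j * (real j + 1)))"
proof (rule summableI_nonneg_bounded)
  fix n
  let ?b = "\<lambda>j. P j / (real j * (real j + 1))" and ?m = "max n K"
  have "sum ?b {..<n} \<le> sum ?b {..<?m}"
    using nonneg by (intro sum_mono2) auto
  also have "\<dots> = sum ?b {..<K} + sum ?b {K..<?m}"
    using sum.atLeastLessThan_concat[of 0 K ?m ?b] by (simp add: atLeast0LessThan)
  also have "sum ?b {K..<?m} \<le> (P K / K - P ?m / ?m) / (1 - t)"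
    using assms by (intro sum_div_consecutive_telescope) auto
  also have "\<dots> \<le> P K / K / (1 - t)"
    using nonneg \<open>t < 1\<close> by (intro divide_right_mono) auto
  finally show "sum ?b {..<n} \<le> sum ?b {..<K} + P K / K / (1 - t)"
    by simp
qed (simp add: nonneg)

lemma summable_prod_div_square:
  fixes r d :: "nat \<Rightarrow> real"
  assumes "1 \<le> K" and "0 < c" and "t < 1" and r_nonneg: "\<And>i. 0 \<le> r i"
    and d_ge: "\<And>j. K \<le> j \<Longrightarrow> c * j \<le> d j"
    and r_le: "\<And>j. K \<le> j \<Longrightarrow> r j \<le> t / j"
  shows "summable (\<lambda>j. (\<Prod>i\<in>{1..<j}. 1 + r i) / (d j)\<^sup>2)"
proof -
  define P where "P j = (\<Prod>i\<in>{1..<j}. 1 + r i)" for j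
  have P_nonneg: "0 \<le> P j" for j
    unfolding P_def using r_nonneg by (simp add: prod_nonneg add_nonneg_nonneg)
  have P_growth: "P (Suc j) \<le> P j * (1 + t / j)" if "K \<le> j" for j
  proof -
    have "P (Suc j) = P j * (1 + r j)"
      unfolding P_def using that \<open>1 \<le> K\<close> by (simp add: prod.atLeastLessThan_Suc)
    then show ?thesis
      using r_le[OF that] P_nonneg[of j] by (simp add: mult_left_mono)
  qed
  have "summable (\<lambda>j. P j / (real j * (real j + 1)))"
    using \<open>1 \<le> K\<close> \<open>t < 1\<close> P_nonneg P_growth by (rule summable_div_consecutive)
  then have "summable (\<lambda>j. 2 / c\<^sup>2 * (P j / (real j * (real j + 1))))"
    by (rule summable_mult)
  moreover have "norm (P j / (d j)\<^sup>2) \<le> 2 / c\<^sup>2 * (P j / (real j * (real j + 1)))" if "K \<le> j" for j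
  proof -
    have "1 \<le> real j" and "0 < c * j" using that \<open>1 \<le> K\<close> \<open>0 < c\<close> by auto
    then have "real j * (real j + 1) \<le> 2 * (real j)\<^sup>2"
      by (simp add: power2_eq_square algebra_simps)
    have lower_pos: "0 < c\<^sup>2 * (real j * (real j + 1) / 2)"
      using \<open>1 \<le> real j\<close> \<open>0 < c\<close> by simp
    from \<open>real j * (real j + 1) \<le> 2 * (real j)\<^sup>2\<close>
    have "c\<^sup>2 * (real j * (real j + 1) / 2) \<le> c\<^sup>2 * (real j)\<^sup>2"
      by (intro mult_left_mono) auto
    also have "\<dots> = (c * j)\<^sup>2"
      by (simp add: power_mult_distrib)
    also have "\<dots> \<le> (d j)\<^sup>2"
      using d_ge[OF that] \<open>0 < c * j\<close> by (intro power_mono) auto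
    finally have "P j / (d j)\<^sup>2 \<le> P j / (c\<^sup>2 * (real j * (real j + 1) / 2))"
      using P_nonneg[of j] lower_pos by (intro frac_le) auto
    then show ?thesis
      using P_nonneg by (simp add: field_simps)
  qed
  ultimately show ?thesis
    unfolding P_def by (rule summable_comparison_test')
qed

section \<open>Pairs of subsets\<close>

lemma inj_on_insert_Pow: "x \<notin> I \<Longrightarrow> inj_on (insert x) (Pow I)"
  by (auto intro!: inj_onI simp: insert_ident)

lemma sum_Pow_insert:
  assumes "finite I" and "x \<notin> I"
  shows "sum h (Pow (insert x I)) = sum h (Pow I) + (\<Sum>S\<in>Pow I. h (insert x S))"
proof -
  have "inj_on (insert x) (Pow I)"
    using \<open>x \<notin> I\<close> by (rule inj_on_insert_Pow)
  moreover have "Pow I \<inter> insert x ` Pow I = {}"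
    using \<open>x \<notin> I\<close> by auto
  ultimately show ?thesis
    unfolding Pow_insert using \<open>finite I\<close> by (simp add: sum.union_disjoint sum.reindex)
qed

lemma sum_Pow_Pow_prod_Un:
  fixes \<rho> :: "'a \<Rightarrow> 'b::comm_semiring_1"
  assumes "finite I"
  shows "(\<Sum>S\<in>Pow I. \<Sum>S'\<in>Pow I. \<Prod>i\<in>S \<union> S'. \<rho> i) = (\<Prod>i\<in>I. 1 + 3 * \<rho> i)"
  using assms
proof (induction I rule: finite_induct)
  case empty
  show ?case by simp
next
  case (insert x I)
  let ?T = "\<lambda>S S'. \<Prod>i\<in>S \<union> S'. \<rho> i"
  have finite_Pow: "finite S" if "S \<in> Pow I" for S
    using that insert.hyps(1) finite_subset by auto
  have with_x: "(\<Prod>i\<in>insert x (S \<union> S'). \<rho> i) = \<rho> x * ?T S S'" if "S \<in> Pow I" "S' \<in> Pow I" for S S'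
    using that insert.hyps(2) finite_Pow by (subst prod.insert) auto
  \<comment> \<open>three of the four ways of adding x to neither, one or both of S and S' put x into the union\<close>
  have "(\<Sum>S\<in>Pow (insert x I). \<Sum>S'\<in>Pow (insert x I). ?T S S')
      = (\<Sum>S\<in>Pow I. \<Sum>S'\<in>Pow I. ?T S S' + ?T S (insert x S') + ?T (insert x S) S' + ?T (insert x S) (insert x S'))"
    by (simp add: sum_Pow_insert[OF insert.hyps] sum.distrib add.assoc)
  also have "\<dots> = (\<Sum>S\<in>Pow I. \<Sum>S'\<in>Pow I. (1 + 3 * \<rho> x) * ?T S S')"
  proof (intro sum.cong refl)
    fix S S' assume "S \<in> Pow I" "S' \<in> Pow I"
    then have "?T S (insert x S') = \<rho> x * ?T S S'" "?T (insert x S) S' = \<rho> x * ?T S S'"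
      "?T (insert x S) (insert x S') = \<rho> x * ?T S S'"
      using with_x by simp_all
    moreover have "(1 + 3 * r) * u = u + r * u + r * u + r * u" for r u :: 'b
      by (simp only: numeral_Bit1 numeral_One distrib_right mult_1_left add.assoc)
    ultimately show "?T S S' + ?T S (insert x S') + ?T (insert x S) S' + ?T (insert x S) (insert x S')
        = (1 + 3 * \<rho> x) * ?T S S'"
      by simp
  qed
  also have "\<dots> = (1 + 3 * \<rho> x) * (\<Sum>S\<in>Pow I. \<Sum>S'\<in>Pow I. ?T S S')"
    by (simp add: sum_distrib_left)
  finally show ?case
    using insert by simp
qed

section \<open>Sampling a point that avoids a family of patterns\<close>

lemma grid_0: "grid q 0 = {\<lambda>_. undefined}"
  unfolding grid_def by simp

lemma grid_Suc: "grid q (Suc k) = (\<lambda>(a, y). y(Suc k := a)) ` ({1..q (Suc k)} \<times> grid q k)"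
proof -
  have "{1..Suc k} = insert (Suc k) {1..k}" by auto
  then show ?thesis
    unfolding grid_def by (simp add: PiE_insert_eq)
qed

lemma sum_grid_Suc:
  "sum f (grid q (Suc k)) = (\<Sum>y\<in>grid q k. \<Sum>a\<in>{1..q (Suc k)}. f (y(Suc k := a)))"
proof -
  have "inj_on (\<lambda>(a, y). y(Suc k := a)) ({1..q (Suc k)} \<times> grid q k)"
    unfolding grid_def by (rule inj_combinator) simp
  then have "sum f (grid q (Suc k)) = (\<Sum>a\<in>{1..q (Suc k)}. \<Sum>y\<in>grid q k. f (y(Suc k := a)))"
    unfolding grid_Suc by (simp add: sum.reindex sum.cartesian_product case_prod_unfold)
  also have "\<dots> = (\<Sum>y\<in>grid q k. \<Sum>a\<in>{1..q (Suc k)}. f (y(Suc k := a)))"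
    by (rule sum.swap)
  finally show ?thesis .
qed

lemma restrict_fun_upd_grid: "y \<in> grid q k \<Longrightarrow> restrict (y(Suc k := a)) {1..k} = y"
  by (auto simp: restrict_def grid_def PiE_def extensional_def)

(*
  A pattern F in patterns with values val F stands for the hyperplane {y. \<forall>i\<in>F. y i = val F i};
  since patterns is a set of fixed sets, distinct hyperplanes have distinct fixed sets.  For y in
  grid q k, weight k y is the probability that the first k coordinates of the random point are y,
  and mass k E is the probability of an event E of these coordinates.
*)
locale pattern_avoidance =
  fixes q :: "nat \<Rightarrow> nat" and patterns :: "nat set set" and val :: "nat set \<Rightarrow> nat \<Rightarrow> nat"
    and \<delta> :: real
  assumes q_pos: "\<And>k. 1 \<le> k \<Longrightarrow> 1 \<le> q k"
    and \<delta>_pos: "0 < \<delta>" and \<delta>_less_1: "\<delta> < 1"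
    and finite_pattern: "\<And>F. F \<in> patterns \<Longrightarrow> finite F"
    and pattern_nonempty: "\<And>F. F \<in> patterns \<Longrightarrow> F \<noteq> {}"
    and zero_notin_pattern: "\<And>F. F \<in> patterns \<Longrightarrow> 0 \<notin> F"
    and val_range: "\<And>F i. F \<in> patterns \<Longrightarrow> i \<in> F \<Longrightarrow> val F i \<in> {1..q i}"
begin

definition top_patterns :: "nat \<Rightarrow> nat set set" where
  "top_patterns j = {F \<in> patterns. Max F = j}"

definition live :: "nat \<Rightarrow> (nat \<Rightarrow> nat) \<Rightarrow> nat set set" where
  "live j y = {F \<in> top_patterns j. \<forall>i\<in>F - {j}. y i = val F i}"

definition blocked :: "nat \<Rightarrow> (nat \<Rightarrow> nat) \<Rightarrow> nat set" where
  "blocked j y = (\<lambda>F. val F j) ` live j y"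

definition few_blocked :: "nat \<Rightarrow> (nat \<Rightarrow> nat) \<Rightarrow> bool" where
  "few_blocked j y \<longleftrightarrow> real (card (blocked j y)) \<le> \<delta> * q j"

definition step_prob :: "nat \<Rightarrow> (nat \<Rightarrow> nat) \<Rightarrow> nat \<Rightarrow> real" where
  "step_prob j y a =
     (if few_blocked j y
      then (if a \<in> blocked j y then 0 else 1 / (real (q j) - real (card (blocked j y))))
      else 1 / q j)"

primrec weight :: "nat \<Rightarrow> (nat \<Rightarrow> nat) \<Rightarrow> real" where
  "weight 0 y = 1"
| "weight (Suc k) y =
     weight k (restrict y {1..k}) * step_prob (Suc k) (restrict y {1..k}) (y (Suc k))"

definition mass :: "nat \<Rightarrow> ((nat \<Rightarrow> nat) \<Rightarrow> bool) \<Rightarrow> real" where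
  "mass k E = (\<Sum>y\<in>grid q k. weight k y * of_bool (E y))"

definition rho :: "nat \<Rightarrow> real" where
  "rho j = 1 / ((1 - \<delta>) * q j)"

definition avoids :: "nat \<Rightarrow> (nat \<Rightarrow> nat) \<Rightarrow> bool" where
  "avoids k y \<longleftrightarrow> (\<forall>F\<in>patterns. Max F \<le> k \<longrightarrow> (\<exists>i\<in>F. y i \<noteq> val F i))"

lemma top_patterns_subset:
  assumes "F \<in> top_patterns j"
  shows "j \<in> F" and "F \<subseteq> {1..j}"
proof -
  have F: "F \<in> patterns" "Max F = j"
    using assms by (auto simp: top_patterns_def)
  show "j \<in> F"
    using Max_in[OF finite_pattern pattern_nonempty] F by metis
  show "F \<subseteq> {1..j}"
  proof
    fix i assume "i \<in> F"
    have "i \<le> j"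
      using Max_ge[OF finite_pattern[OF F(1)] \<open>i \<in> F\<close>] F(2) by simp
    moreover have "i \<noteq> 0"
      using zero_notin_pattern[OF F(1)] \<open>i \<in> F\<close> by metis
    ultimately show "i \<in> {1..j}" by simp
  qed
qed

lemma top_patterns_subset_Pow: "top_patterns j \<subseteq> insert j ` Pow {1..<j}"
proof
  fix F assume "F \<in> top_patterns j"
  then have "F = insert j (F - {j})" and "F - {j} \<in> Pow {1..<j}"
    using top_patterns_subset[of F j] by (auto simp: insert_absorb)
  then show "F \<in> insert j ` Pow {1..<j}" by blast
qed

lemma finite_top_patterns: "finite (top_patterns j)"
  using top_patterns_subset_Pow by (rule finite_subset) simp

lemma live_subset: "live j y \<subseteq> top_patterns j"
  by (auto simp: live_def)

lemma finite_live: "finite (live j y)"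
  using live_subset finite_top_patterns by (rule finite_subset)

lemma blocked_subset: "blocked j y \<subseteq> {1..q j}"
  unfolding blocked_def live_def using val_range top_patterns_subset(1)
  by (auto simp: top_patterns_def)

lemma card_blocked_le: "card (blocked j y) \<le> card (live j y)"
  unfolding blocked_def using finite_live by (rule card_image_le)

lemma few_blocked_less:
  assumes "1 \<le> j" and "few_blocked j y"
  shows "real (card (blocked j y)) < q j"
proof -
  have "\<delta> * q j < q j"
    using q_pos[OF \<open>1 \<le> j\<close>] \<delta>_less_1 by simp
  then show ?thesis
    using \<open>few_blocked j y\<close> by (simp add: few_blocked_def)
qed

lemma step_prob_nonneg: "1 \<le> j \<Longrightarrow> 0 \<le> step_prob j y a"
  using few_blocked_less[of j y] by (auto simp: step_prob_def)

lemma sum_step_prob_unblocked: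
  assumes "1 \<le> j" and "few_blocked j y"
  shows "(\<Sum>a\<in>{1..q j}. step_prob j y a * of_bool (a \<notin> blocked j y)) = 1"
proof -
  let ?free = "real (q j) - real (card (blocked j y))"
  have "(\<Sum>a\<in>{1..q j}. step_prob j y a * of_bool (a \<notin> blocked j y))
      = (\<Sum>a\<in>{1..q j} - blocked j y. 1 / ?free)"
    using \<open>few_blocked j y\<close> by (intro sum.mono_neutral_cong_right) (auto simp: step_prob_def)
  also have "\<dots> = real (card ({1..q j} - blocked j y)) / ?free"
    by simp
  also have "card ({1..q j} - blocked j y) = q j - card (blocked j y)"
    using blocked_subset[of j y] by (simp add: card_Diff_subset finite_subset)
  also have "real (q j - card (blocked j y)) = ?free"
    using few_blocked_less[OF assms] by (simp add: of_nat_diff)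
  finally show ?thesis
    using few_blocked_less[OF assms] by simp
qed

lemma sum_step_prob:
  assumes "1 \<le> j"
  shows "(\<Sum>a\<in>{1..q j}. step_prob j y a) = 1"
proof (cases "few_blocked j y")
  case True
  have "(\<Sum>a\<in>{1..q j}. step_prob j y a) = (\<Sum>a\<in>{1..q j}. step_prob j y a * of_bool (a \<notin> blocked j y))"
    using True by (intro sum.cong) (simp_all add: step_prob_def)
  also have "\<dots> = 1"
    using assms True by (rule sum_step_prob_unblocked)
  finally show ?thesis .
next
  case False
  then show ?thesis
    using q_pos[OF assms] by (simp add: step_prob_def)
qed

lemma rho_nonneg: "0 \<le> rho j"
  using \<delta>_less_1 by (simp add: rho_def)

lemma step_prob_le_rho:
  assumes "1 \<le> j"
  shows "step_prob j y a \<le> rho j"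
proof -
  have "1 \<le> real (q j)" and "0 < 1 - \<delta>"
    using q_pos[OF assms] \<delta>_less_1 by auto
  then have pos: "0 < (1 - \<delta>) * q j" and "(1 - \<delta>) * q j \<le> q j"
    using \<delta>_pos by auto
  then have "1 / q j \<le> rho j"
    unfolding rho_def using \<delta>_less_1 by (intro divide_left_mono mult_pos_pos) auto
  moreover have "1 / (real (q j) - real (card (blocked j y))) \<le> rho j" if "few_blocked j y"
  proof -
    have "(1 - \<delta>) * q j \<le> real (q j) - real (card (blocked j y))"
      using that by (simp add: few_blocked_def algebra_simps)
    with pos show ?thesis
      unfolding rho_def using \<delta>_less_1 by (intro divide_left_mono mult_pos_pos) auto
  qed
  ultimately show ?thesis
    using rho_nonneg by (simp add: step_prob_def)
qed

lemma weight_fun_upd: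
  "y \<in> grid q k \<Longrightarrow> weight (Suc k) (y(Suc k := a)) = weight k y * step_prob (Suc k) y a"
  by (simp only: weight.simps fun_upd_same restrict_fun_upd_grid)

lemma weight_nonneg: "0 \<le> weight k y"
  by (induction k arbitrary: y) (simp_all add: step_prob_nonneg)

lemma mass_Suc:
  "mass (Suc k) E = (\<Sum>y\<in>grid q k. weight k y *
     (\<Sum>a\<in>{1..q (Suc k)}. step_prob (Suc k) y a * of_bool (E (y(Suc k := a)))))"
  unfolding mass_def sum_grid_Suc
  by (intro sum.cong refl) (simp only: weight_fun_upd sum_distrib_left mult.assoc)

lemma mass_mono:
  assumes "\<And>y. y \<in> grid q k \<Longrightarrow> E y \<Longrightarrow> E' y"
  shows "mass k E \<le> mass k E'"
  unfolding mass_def using assms weight_nonneg by (intro sum_mono) (simp add: mult_left_mono)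

lemma mass_pos_imp_ex:
  assumes "0 < mass k E"
  shows "\<exists>y\<in>grid q k. E y"
proof (rule ccontr)
  assume "\<not> (\<exists>y\<in>grid q k. E y)"
  then have "mass k E = 0"
    by (simp add: mass_def)
  with assms show False by simp
qed

lemma sum_step_prob_agree_le:
  assumes "1 \<le> j"
  shows "(\<Sum>a\<in>{1..q j}. step_prob j y a * of_bool (P \<longrightarrow> a = c)) \<le> (if P then rho j else 1)"
proof (cases P)
  case True
  have "{1..q j} \<inter> {a. a = c} = (if c \<in> {1..q j} then {c} else {})"
    by auto
  then have "(\<Sum>a\<in>{1..q j}. step_prob j y a * of_bool (a = c)) \<le> rho j"
    using step_prob_le_rho[OF assms] rho_nonneg by simp
  with True show ?thesis by simp
next
  case False
  then show ?thesis
    using sum_step_prob[OF assms] by simp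
qed

lemma mass_agree_le:
  "T \<subseteq> {1..k} \<Longrightarrow> mass k (\<lambda>y. \<forall>i\<in>T. y i = b i) \<le> (\<Prod>i\<in>T. rho i)"
proof (induction k arbitrary: T)
  case 0
  then show ?case
    by (simp add: mass_def grid_0)
next
  case (Suc k)
  let ?T = "T - {Suc k}" and ?r = "if Suc k \<in> T then rho (Suc k) else 1"
  have agree_upd: "(\<forall>i\<in>T. (y(Suc k := a)) i = b i) \<longleftrightarrow> (\<forall>i\<in>?T. y i = b i) \<and> (Suc k \<in> T \<longrightarrow> a = b (Suc k))"
    for y a by auto
  have "mass (Suc k) (\<lambda>y. \<forall>i\<in>T. y i = b i) = (\<Sum>y\<in>grid q k. weight k y * of_bool (\<forall>i\<in>?T. y i = b i) *
      (\<Sum>a\<in>{1..q (Suc k)}. step_prob (Suc k) y a * of_bool (Suc k \<in> T \<longrightarrow> a = b (Suc k))))"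
    unfolding mass_Suc agree_upd of_bool_conj
    by (intro sum.cong refl) (simp add: sum_distrib_left mult_ac del: sum_mult_of_bool_eq)
  also have "\<dots> \<le> (\<Sum>y\<in>grid q k. weight k y * of_bool (\<forall>i\<in>?T. y i = b i) * ?r)"
    using weight_nonneg sum_step_prob_agree_le by (intro sum_mono mult_left_mono) auto
  also have "\<dots> = mass k (\<lambda>y. \<forall>i\<in>?T. y i = b i) * ?r"
    by (simp add: mass_def sum_distrib_right)
  also have "\<dots> \<le> (\<Prod>i\<in>?T. rho i) * ?r"
  proof -
    have "?T \<subseteq> {1..k}"
      using Suc.prems by (auto simp: le_Suc_eq)
    then show ?thesis
      using Suc.IH rho_nonneg by (intro mult_right_mono) auto
  qed
  also have "\<dots> = (\<Prod>i\<in>T. rho i)"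
    using Suc.prems by (auto simp: prod.remove[of T "Suc k"] finite_subset mult.commute)
  finally show ?case .
qed

lemma avoids_0: "avoids 0 y"
  unfolding avoids_def
  using Max_in[OF finite_pattern pattern_nonempty] zero_notin_pattern by fastforce

lemma avoids_fun_upd:
  assumes "avoids k y" and "a \<notin> blocked (Suc k) y"
  shows "avoids (Suc k) (y(Suc k := a))"
  unfolding avoids_def
proof (intro ballI impI)
  fix F assume F: "F \<in> patterns" "Max F \<le> Suc k"
  show "\<exists>i\<in>F. (y(Suc k := a)) i \<noteq> val F i"
  proof (cases "Max F = Suc k")
    case False
    then obtain i where "i \<in> F" "y i \<noteq> val F i"
      using \<open>avoids k y\<close> F by (auto simp: avoids_def)
    moreover have "i \<le> k"
      using Max_ge[OF finite_pattern[OF F(1)] \<open>i \<in> F\<close>] F(2) False by simp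
    ultimately show ?thesis by (intro bexI[of _ i]) auto
  next
    case True
    then have top: "F \<in> top_patterns (Suc k)"
      using F(1) by (simp add: top_patterns_def)
    show ?thesis
    proof (cases "\<forall>i\<in>F - {Suc k}. y i = val F i")
      case True
      then have "val F (Suc k) \<noteq> a"
        using top \<open>a \<notin> blocked (Suc k) y\<close> by (auto simp: blocked_def live_def)
      then show ?thesis
        using top_patterns_subset(1)[OF top] by auto
    next
      case False
      then show ?thesis by auto
    qed
  qed
qed

lemma mass_avoids_ge: "1 - (\<Sum>i<k. mass i (\<lambda>y. \<not> few_blocked (Suc i) y)) \<le> mass k (avoids k)"
proof (induction k)
  case 0
  show ?case
    by (simp add: mass_def grid_0 avoids_0)
next
  case (Suc k)
  have pointwise: "weight k y * (of_bool (avoids k y) - of_bool (\<not> few_blocked (Suc k) y))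
      \<le> weight k y * (\<Sum>a\<in>{1..q (Suc k)}. step_prob (Suc k) y a * of_bool (avoids (Suc k) (y(Suc k := a))))"
    for y
  proof (intro mult_left_mono[OF _ weight_nonneg])
    have "of_bool (avoids k y \<and> few_blocked (Suc k) y)
        \<le> (\<Sum>a\<in>{1..q (Suc k)}. step_prob (Suc k) y a * of_bool (avoids (Suc k) (y(Suc k := a))))"
    proof (cases "avoids k y \<and> few_blocked (Suc k) y")
      case True
      then have "1 = (\<Sum>a\<in>{1..q (Suc k)}. step_prob (Suc k) y a * of_bool (a \<notin> blocked (Suc k) y))"
        using sum_step_prob_unblocked by simp
      also have "\<dots> \<le> (\<Sum>a\<in>{1..q (Suc k)}. step_prob (Suc k) y a * of_bool (avoids (Suc k) (y(Suc k := a))))"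
        using True avoids_fun_upd step_prob_nonneg
        by (intro sum_mono mult_left_mono) (auto simp del: sum_mult_of_bool_eq)
      finally show ?thesis
        using True by simp
    next
      case False
      have "0 \<le> (\<Sum>a\<in>{1..q (Suc k)}. step_prob (Suc k) y a * of_bool (avoids (Suc k) (y(Suc k := a))))"
        using step_prob_nonneg by (intro sum_nonneg) simp
      with False show ?thesis
        by (simp only: of_bool_eq(1) False)
    qed
    then show "of_bool (avoids k y) - of_bool (\<not> few_blocked (Suc k) y)
        \<le> (\<Sum>a\<in>{1..q (Suc k)}. step_prob (Suc k) y a * of_bool (avoids (Suc k) (y(Suc k := a))))"
      by auto
  qed
  have "mass k (avoids k) - mass k (\<lambda>y. \<not> few_blocked (Suc k) y)
      = (\<Sum>y\<in>grid q k. weight k y * (of_bool (avoids k y) - of_bool (\<not> few_blocked (Suc k) y)))"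
    by (simp add: mass_def sum_subtractf right_diff_distrib del: sum_mult_of_bool_eq)
  also have "\<dots> \<le> mass (Suc k) (avoids (Suc k))"
    unfolding mass_Suc using pointwise by (rule sum_mono)
  finally have "mass k (avoids k) - mass k (\<lambda>y. \<not> few_blocked (Suc k) y) \<le> mass (Suc k) (avoids (Suc k))" .
  with Suc.IH show ?case
    by simp
qed

lemma mass_live_pair_le:
  assumes "F \<in> top_patterns (Suc k)" and "F' \<in> top_patterns (Suc k)"
  shows "mass k (\<lambda>y. F \<in> live (Suc k) y \<and> F' \<in> live (Suc k) y) \<le> (\<Prod>i\<in>F \<union> F' - {Suc k}. rho i)"
proof -
  define b where "b i = (if i \<in> F then val F i else val F' i)" for i
  have "mass k (\<lambda>y. F \<in> live (Suc k) y \<and> F' \<in> live (Suc k) y)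
      \<le> mass k (\<lambda>y. \<forall>i\<in>F \<union> F' - {Suc k}. y i = b i)"
    by (rule mass_mono) (auto simp: live_def b_def)
  also have "\<dots> \<le> (\<Prod>i\<in>F \<union> F' - {Suc k}. rho i)"
    using top_patterns_subset(2)[OF assms(1)] top_patterns_subset(2)[OF assms(2)]
    by (intro mass_agree_le) (auto simp: le_Suc_eq)
  finally show ?thesis .
qed

lemma sum_top_pattern_pairs_le:
  "(\<Sum>F\<in>top_patterns j. \<Sum>F'\<in>top_patterns j. \<Prod>i\<in>F \<union> F' - {j}. rho i) \<le> (\<Prod>i\<in>{1..<j}. 1 + 3 * rho i)"
proof -
  let ?P = "insert j ` Pow {1..<j}" and ?g = "\<lambda>F F'. \<Prod>i\<in>F \<union> F' - {j}. rho i"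
  have g_nonneg: "0 \<le> ?g F F'" for F F'
    using rho_nonneg by (simp add: prod_nonneg)
  have "(\<Sum>F\<in>top_patterns j. \<Sum>F'\<in>top_patterns j. ?g F F') \<le> (\<Sum>F\<in>top_patterns j. \<Sum>F'\<in>?P. ?g F F')"
    using top_patterns_subset_Pow g_nonneg by (intro sum_mono sum_mono2) auto
  also have "\<dots> \<le> (\<Sum>F\<in>?P. \<Sum>F'\<in>?P. ?g F F')"
    using top_patterns_subset_Pow g_nonneg by (intro sum_mono2 sum_nonneg) auto
  also have "\<dots> = (\<Sum>S\<in>Pow {1..<j}. \<Sum>S'\<in>Pow {1..<j}. ?g (insert j S) (insert j S'))"
    using inj_on_insert_Pow[of j "{1..<j}"] by (simp add: sum.reindex)
  also have "\<dots> = (\<Sum>S\<in>Pow {1..<j}. \<Sum>S'\<in>Pow {1..<j}. \<Prod>i\<in>S \<union> S'. rho i)"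
  proof (intro sum.cong refl)
    fix S S' assume "S \<in> Pow {1..<j}" "S' \<in> Pow {1..<j}"
    then have "insert j S \<union> insert j S' - {j} = S \<union> S'" by auto
    then show "?g (insert j S) (insert j S') = (\<Prod>i\<in>S \<union> S'. rho i)" by simp
  qed
  also have "\<dots> = (\<Prod>i\<in>{1..<j}. 1 + 3 * rho i)"
    by (simp add: sum_Pow_Pow_prod_Un)
  finally show ?thesis .
qed

lemma second_moment_live_le:
  "(\<Sum>y\<in>grid q k. weight k y * (real (card (live (Suc k) y)))\<^sup>2) \<le> (\<Prod>i\<in>{1..<Suc k}. 1 + 3 * rho i)"
proof -
  let ?T = "top_patterns (Suc k)"
  have "real (card (live (Suc k) y)) = (\<Sum>F\<in>?T. of_bool (F \<in> live (Suc k) y))" for y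
    using finite_top_patterns live_subset by (simp add: Int_absorb1)
  then have "(real (card (live (Suc k) y)))\<^sup>2 = (\<Sum>F\<in>?T. \<Sum>G\<in>?T. of_bool (F \<in> live (Suc k) y \<and> G \<in> live (Suc k) y))" for y
    by (simp add: power2_eq_square sum_product of_bool_conj)
  then have "(\<Sum>y\<in>grid q k. weight k y * (real (card (live (Suc k) y)))\<^sup>2)
      = (\<Sum>y\<in>grid q k. \<Sum>F\<in>?T. \<Sum>G\<in>?T. weight k y * of_bool (F \<in> live (Suc k) y \<and> G \<in> live (Suc k) y))"
    by (simp add: sum_distrib_left)
  also have "\<dots> = (\<Sum>F\<in>?T. \<Sum>G\<in>?T. mass k (\<lambda>y. F \<in> live (Suc k) y \<and> G \<in> live (Suc k) y))"
    unfolding mass_def by (subst sum.swap) (simp only: sum.swap[of _ "grid q k"])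
  also have "\<dots> \<le> (\<Sum>F\<in>?T. \<Sum>G\<in>?T. \<Prod>i\<in>F \<union> G - {Suc k}. rho i)"
    by (intro sum_mono mass_live_pair_le)
  also have "\<dots> \<le> (\<Prod>i\<in>{1..<Suc k}. 1 + 3 * rho i)"
    by (rule sum_top_pattern_pairs_le)
  finally show ?thesis .
qed

lemma mass_crowded_le:
  "mass k (\<lambda>y. \<not> few_blocked (Suc k) y) \<le> (\<Prod>i\<in>{1..<Suc k}. 1 + 3 * rho i) / (\<delta> * q (Suc k))\<^sup>2"
proof -
  let ?D = "\<delta> * q (Suc k)"
  have "0 < ?D"
    using \<delta>_pos q_pos[of "Suc k"] by simp
  \<comment> \<open>Markov's inequality for the square of the number of live patterns\<close>
  have "weight k y * of_bool (\<not> few_blocked (Suc k) y) \<le> weight k y * (real (card (live (Suc k) y)))\<^sup>2 / ?D\<^sup>2" for y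
  proof (cases "few_blocked (Suc k) y")
    case False
    then have "?D < real (card (live (Suc k) y))"
      using card_blocked_le[of "Suc k" y] by (simp add: few_blocked_def)
    then have "?D\<^sup>2 \<le> (real (card (live (Suc k) y)))\<^sup>2"
      using \<open>0 < ?D\<close> by (intro power_mono) auto
    moreover have "0 < ?D\<^sup>2"
      using \<open>0 < ?D\<close> by (rule zero_less_power)
    ultimately have "1 \<le> (real (card (live (Suc k) y)))\<^sup>2 / ?D\<^sup>2"
      by (simp only: le_divide_eq_1_pos)
    then show ?thesis
      using False weight_nonneg mult_left_mono by fastforce
  qed (simp add: weight_nonneg)
  then have "mass k (\<lambda>y. \<not> few_blocked (Suc k) y) \<le> (\<Sum>y\<in>grid q k. weight k y * (real (card (live (Suc k) y)))\<^sup>2) / ?D\<^sup>2"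
    unfolding mass_def sum_divide_distrib by (intro sum_mono) (simp del: sum_mult_of_bool_eq)
  also have "\<dots> \<le> (\<Prod>i\<in>{1..<Suc k}. 1 + 3 * rho i) / ?D\<^sup>2"
    using second_moment_live_le by (rule divide_right_mono) simp
  finally show ?thesis .
qed

lemma mass_crowded_eq_0:
  "top_patterns (Suc k) = {} \<Longrightarrow> mass k (\<lambda>y. \<not> few_blocked (Suc k) y) = 0"
  using \<delta>_pos by (simp add: mass_def few_blocked_def blocked_def live_def)

lemma exists_avoiding_point:
  assumes beyond: "\<And>F. F \<in> patterns \<Longrightarrow> C < Max F"
    and within: "\<And>F. F \<in> patterns \<Longrightarrow> F \<subseteq> {1..n}"
    and tail: "(\<Sum>j\<in>{C<..n}. (\<Prod>i\<in>{1..<j}. 1 + 3 * rho i) / (\<delta> * q j)\<^sup>2) < 1"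
  shows "\<exists>y\<in>grid q n. \<forall>F\<in>patterns. \<exists>i\<in>F. y i \<noteq> val F i"
proof -
  define bound where "bound j = (if C < j then (\<Prod>i\<in>{1..<j}. 1 + 3 * rho i) / (\<delta> * q j)\<^sup>2 else 0)" for j
  have "mass i (\<lambda>y. \<not> few_blocked (Suc i) y) \<le> bound (Suc i)" for i
  proof (cases "C < Suc i")
    case False
    then have "top_patterns (Suc i) = {}"
      using beyond by (fastforce simp: top_patterns_def)
    with False show ?thesis
      by (simp add: mass_crowded_eq_0 bound_def)
  qed (use mass_crowded_le[of i] in \<open>simp add: bound_def\<close>)
  then have "(\<Sum>i<n. mass i (\<lambda>y. \<not> few_blocked (Suc i) y)) \<le> (\<Sum>i<n. bound (Suc i))"
    by (rule sum_mono)
  also have "\<dots> = (\<Sum>j\<in>{1..n}. bound j)"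
    by (simp add: sum.atLeast1_atMost_eq)
  also have "\<dots> = (\<Sum>j\<in>{C<..n}. (\<Prod>i\<in>{1..<j}. 1 + 3 * rho i) / (\<delta> * q j)\<^sup>2)"
    unfolding bound_def by (intro sum.mono_neutral_cong_right) auto
  finally have "0 < mass n (avoids n)"
    using mass_avoids_ge[of n] tail by linarith
  then obtain y where "y \<in> grid q n" and "avoids n y"
    using mass_pos_imp_ex by blast
  moreover have "Max F \<le> n" if "F \<in> patterns" for F
    using within[OF that] Max_in[OF finite_pattern pattern_nonempty, OF that that] by auto
  ultimately show ?thesis
    by (auto simp: avoids_def)
qed

end

section \<open>Covers by pairwise non-parallel hyperplanes\<close>

lemma hyperplane_fixed_coord:
  assumes "is_hyperplane q n A" and "i \<in> fixed_coords n A"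
  shows "i \<in> {1..n}" and "\<exists>a\<in>{1..q i}. A i = {a}"
proof -
  show "i \<in> {1..n}"
    using assms(2) by (simp add: fixed_coords_def)
  then have "A i = {1..q i} \<or> (\<exists>b\<in>{1..q i}. A i = {b})"
    using assms(1) by (simp add: is_hyperplane_def)
  moreover obtain a where "A i = {a}"
    using assms(2) by (auto simp: fixed_coords_def)
  ultimately show "\<exists>a\<in>{1..q i}. A i = {a}"
    by auto
qed

lemma exists_point_outside_hyperplanes:
  fixes \<A> :: "(nat \<Rightarrow> nat set) set" and \<delta> :: real
  assumes q_pos: "\<And>k. 1 \<le> k \<Longrightarrow> 1 \<le> q k" and "0 < \<delta>" and "\<delta> < 1"
    and tail: "(\<Sum>j\<in>{C<..n}. (\<Prod>i\<in>{1..<j}. 1 + 3 / ((1 - \<delta>) * q i)) / (\<delta> * q j)\<^sup>2) < 1"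
    and hyperplanes: "\<forall>A\<in>\<A>. is_hyperplane q n A"
    and nonparallel: "inj_on (fixed_coords n) \<A>"
    and beyond: "\<forall>A\<in>\<A>. \<not> fixed_coords n A \<subseteq> {1..C}"
  shows "\<exists>y\<in>grid q n. \<forall>A\<in>\<A>. y \<notin> hyp_set n A"
proof -
  define val where "val F i = the_elem (inv_into \<A> (fixed_coords n) F i)" for F i
  have val: "val (fixed_coords n A) i = the_elem (A i)" if "A \<in> \<A>" for A i
    unfolding val_def using nonparallel that by (simp add: inv_into_f_f)
  have within: "fixed_coords n A \<subseteq> {1..n}" for A
    by (auto simp: fixed_coords_def)
  have finite_fixed: "finite (fixed_coords n A)" for A
    using within by (rule finite_subset) simp
  have zero_notin_fixed: "0 \<notin> fixed_coords n A" for A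
    using within by fastforce
  have nonempty: "fixed_coords n A \<noteq> {}" if "A \<in> \<A>" for A
    using beyond that by auto
  interpret pattern_avoidance q "fixed_coords n ` \<A>" val \<delta>
  proof
    fix F i assume "F \<in> fixed_coords n ` \<A>" and "i \<in> F"
    then obtain A where "A \<in> \<A>" and "i \<in> fixed_coords n A" and F: "F = fixed_coords n A"
      by blast
    then obtain a where "a \<in> {1..q i}" and "A i = {a}"
      using hyperplanes hyperplane_fixed_coord(2) by blast
    then show "val F i \<in> {1..q i}"
      using val \<open>A \<in> \<A>\<close> F by simp
  qed (use q_pos \<open>0 < \<delta>\<close> \<open>\<delta> < 1\<close> finite_fixed zero_notin_fixed nonempty in auto)
  have "\<exists>y\<in>grid q n. \<forall>F\<in>fixed_coords n ` \<A>. \<exists>i\<in>F. y i \<noteq> val F i"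
  proof (rule exists_avoiding_point)
    fix F assume "F \<in> fixed_coords n ` \<A>"
    then obtain A where "A \<in> \<A>" and F: "F = fixed_coords n A" by blast
    then obtain i where "i \<in> F" and "i \<notin> {1..C}"
      using beyond by blast
    moreover have "1 \<le> i"
      using \<open>i \<in> F\<close> F by (simp add: fixed_coords_def)
    ultimately show "C < Max F"
      using Max_ge[OF finite_subset[OF within finite_atLeastAtMost]] F by fastforce
    show "F \<subseteq> {1..n}"
      using F within by simp
  next
    show "(\<Sum>j\<in>{C<..n}. (\<Prod>i\<in>{1..<j}. 1 + 3 * rho i) / (\<delta> * q j)\<^sup>2) < 1"
      using tail by (simp add: rho_def)
  qed
  then obtain y where "y \<in> grid q n" and y: "\<forall>A\<in>\<A>. \<exists>i\<in>fixed_coords n A. y i \<noteq> the_elem (A i)"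
    using val by auto
  have "y \<notin> hyp_set n A" if A: "A \<in> \<A>" for A
  proof
    assume "y \<in> hyp_set n A"
    have hyp: "is_hyperplane q n A"
      using hyperplanes A by blast
    obtain i where i: "i \<in> fixed_coords n A" and "y i \<noteq> the_elem (A i)"
      using bspec[OF y A] ..
    moreover obtain a where "A i = {a}"
      using hyperplane_fixed_coord(2)[OF hyp i] by blast
    moreover have "y i \<in> A i"
      using \<open>y \<in> hyp_set n A\<close> hyperplane_fixed_coord(1)[OF hyp i]
      unfolding hyp_set_def by (rule PiE_mem)
    ultimately show False
      by simp
  qed
  with \<open>y \<in> grid q n\<close> show ?thesis by blast
qed

lemma eventually_linear_lower_bound:
  fixes f :: "nat \<Rightarrow> real"
  assumes "ereal b < liminf (\<lambda>k. ereal (f k / real k))"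
  obtains c where "b < c" and "eventually (\<lambda>k. c * real k \<le> f k) sequentially"
proof -
  obtain c where "ereal b < ereal c" and "ereal c < liminf (\<lambda>k. ereal (f k / real k))"
    using ereal_dense2[OF assms] by blast
  then have "b < c" and "eventually (\<lambda>k. c < f k / real k) sequentially"
    using less_LiminfD by fastforce+
  from this(2) eventually_gt_at_top[of "0::nat"]
  have "eventually (\<lambda>k. c * real k \<le> f k) sequentially"
    by eventually_elim (simp add: pos_less_divide_eq less_imp_le)
  with \<open>b < c\<close> show thesis
    using that by blast
qed

lemma tail_bound_of_linear_growth:
  fixes q :: "nat \<Rightarrow> nat"
  assumes "3 < c" and "eventually (\<lambda>j. c * real j \<le> q j) sequentially"
  obtains \<delta> :: real and C :: nat where "0 < \<delta>" and "\<delta> < 1"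
    and "\<And>n. (\<Sum>j\<in>{C<..n}. (\<Prod>i\<in>{1..<j}. 1 + 3 / ((1 - \<delta>) * q i)) / (\<delta> * q j)\<^sup>2) < 1"
proof -
  obtain K where "1 \<le> K" and growth: "\<And>j. K \<le> j \<Longrightarrow> c * real j \<le> q j"
    using assms(2) unfolding eventually_sequentially by (metis max.cobounded1 max.cobounded2 order_trans)
  \<comment> \<open>any choice with (1 - delta) c > 3 works; this one makes 3 / ((1 - delta) c j) equal to t / j\<close>
  define \<delta> where "\<delta> = (1 - 3 / c) / 2"
  define t where "t = 6 / (c + 3)"
  have "0 < \<delta>" and "\<delta> < 1" and "t < 1" and "(1 - \<delta>) * c = (c + 3) / 2"
    using \<open>3 < c\<close> by (simp_all add: \<delta>_def t_def field_simps)
  have r_le: "3 / ((1 - \<delta>) * q j) \<le> t / j" if "K \<le> j" for j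
  proof -
    have "0 < (1 - \<delta>) * (c * j)"
      using \<open>\<delta> < 1\<close> \<open>3 < c\<close> \<open>1 \<le> K\<close> that by simp
    moreover have "(1 - \<delta>) * (c * j) \<le> (1 - \<delta>) * q j"
      using growth[OF that] \<open>\<delta> < 1\<close> by simp
    ultimately have "3 / ((1 - \<delta>) * q j) \<le> 3 / ((1 - \<delta>) * (c * j))"
      by (intro frac_le) auto
    also have "\<dots> = 3 / ((c + 3) / 2 * j)"
      by (subst mult.assoc[symmetric]) (simp only: \<open>(1 - \<delta>) * c = (c + 3) / 2\<close>)
    also have "\<dots> = t / j"
      by (simp add: t_def)
    finally show ?thesis .
  qed
  define a where "a j = (\<Prod>i\<in>{1..<j}. 1 + 3 / ((1 - \<delta>) * q i)) / (\<delta> * q j)\<^sup>2" for j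
  have "summable a"
    unfolding a_def
  proof (rule summable_prod_div_square[where K = K and c = "\<delta> * c" and t = t])
    show "0 < \<delta> * c"
      using \<open>0 < \<delta>\<close> \<open>3 < c\<close> by simp
    show "0 \<le> 3 / ((1 - \<delta>) * q i)" for i
      using \<open>\<delta> < 1\<close> by simp
    show "\<delta> * c * j \<le> \<delta> * q j" if "K \<le> j" for j
      using growth[OF that] \<open>0 < \<delta>\<close> by simp
  qed (use \<open>1 \<le> K\<close> \<open>t < 1\<close> r_le in auto)
  moreover have "0 \<le> a j" for j
    unfolding a_def using \<open>\<delta> < 1\<close> by (intro divide_nonneg_nonneg prod_nonneg) auto
  ultimately obtain C where "\<And>n. (\<Sum>j\<in>{C<..n}. a j) < 1"
    using summable_tail_sums_less[of a 1] by auto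
  with \<open>0 < \<delta>\<close> \<open>\<delta> < 1\<close> show thesis
    using that unfolding a_def by blast
qed

theorem theorem1p4:
  fixes q :: "nat \<Rightarrow> nat"
  assumes "\<forall>k\<ge>1. q k \<ge> 2"
    and "liminf (\<lambda>k. ereal (real (q k) / real k)) > 3"
  shows "\<exists>C::nat. \<forall>n::nat. \<forall>\<A>::(nat \<Rightarrow> nat set) set.
           (\<forall>A\<in>\<A>. is_hyperplane q n A) \<and> (\<Union>A\<in>\<A>. hyp_set n A) = grid q n \<longrightarrow>
           (\<exists>A\<in>\<A>. \<exists>A'\<in>\<A>. A \<noteq> A' \<and> parallel n A A') \<or>
           (\<exists>A\<in>\<A>. fixed_coords n A \<subseteq> {1..C})"
proof -
  have q_pos: "1 \<le> q k" if "1 \<le> k" for k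
    using assms(1) that by force
  obtain c where "3 < c" and growth: "eventually (\<lambda>k. c * real k \<le> q k) sequentially"
    using eventually_linear_lower_bound[of 3 "\<lambda>k. real (q k)"] assms(2) by auto
  obtain \<delta> :: real and C :: nat where \<delta>: "0 < \<delta>" "\<delta> < 1"
    and tail: "\<And>n. (\<Sum>j\<in>{C<..n}. (\<Prod>i\<in>{1..<j}. 1 + 3 / ((1 - \<delta>) * q i)) / (\<delta> * q j)\<^sup>2) < 1"
    using tail_bound_of_linear_growth[OF \<open>3 < c\<close> growth] by blast
  show ?thesis
  proof (intro exI[of _ C] allI impI)
    fix n \<A>
    assume cover: "(\<forall>A\<in>\<A>. is_hyperplane q n A) \<and> (\<Union>A\<in>\<A>. hyp_set n A) = grid q n"
    show "(\<exists>A\<in>\<A>. \<exists>A'\<in>\<A>. A \<noteq> A' \<and> parallel n A A') \<or> (\<exists>A\<in>\<A>. fixed_coords n A \<subseteq> {1..C})"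
    proof (rule ccontr)
      assume "\<not> ?thesis"
      then have "inj_on (fixed_coords n) \<A>" and "\<forall>A\<in>\<A>. \<not> fixed_coords n A \<subseteq> {1..C}"
        by (auto simp: inj_on_def parallel_def)
      then obtain y where "y \<in> grid q n" and outside: "\<forall>A\<in>\<A>. y \<notin> hyp_set n A"
        using exists_point_outside_hyperplanes[OF q_pos \<delta> tail conjunct1[OF cover]] by blast
      then have "y \<in> (\<Union>A\<in>\<A>. hyp_set n A)"
        using cover by simp
      with outside show False
        by blast
    qed
  qed
qed

end
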